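(* Let $(X,\mathcal{R})$ be a commutative $d$-class association scheme and let $\mathbf{x}\in\mathbb{Q}^X$ be a nonzero vector (the characteristic vector of a nonempty subset $C\subseteq X$, or more generally of a rationally weighted subset $C$), with inner distribution $a=[a_0,\ldots,a_d]$, $a_i=\mathbf{x}^\top A_i\mathbf{x}/\mathbf{x}^\top\mathbf{x}$, and let $T(C)=\{j: E_j\mathbf{x}=0\}$. Then: (i) if $j\in T(C)$ and $\sigma\in\Sigma_\mathbb{Q}$, then $j^\sigma\in T(C)$; hence $T(C)$ is a union of orbits $\mathcal{Q}_j\in\{\mathcal{Q}_1,\ldots,\mathcal{Q}_e\}$; (ii) if $\iota(i)=\iota(j)$ and $aQ_i=0$, then $aQ_j=0$; equivalently, if $E_i\mathbf{x}=0$ then $E_j\mathbf{x}=0$; (iii) if $aQ_i=0$ then $a\overline{Q}_{\iota(i)}=0$; equivalently, if $E_i\mathbf{x}=0$ then $F_{\iota(i)}\mathbf{x}=0$. Here $Q_i$ denotes column $i$ of $Q$ and $\overline{Q}_\ell$ column $\ell$ of $\overline{Q}$.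
   Context: A (commutative) association scheme is a pair $(X,\mathcal{R})$ with $X$ a nonempty finite set and $\mathcal{R}=\{R_0,\ldots,R_d\}$ a partition of $X\times X$ such that $R_0$ is the identity relation, each transpose $R_i^\top$ is some $R_{i'}$, and there are numbers $p_{ij}^k=p_{ji}^k$ such that for every $(a,b)\in R_k$ the number of $c$ with $(a,c)\in R_i$, $(c,b)\in R_j$ is $p_{ij}^k$. Its adjacency matrices $A_0,\ldots,A_d$ are the $0/1$ matrices of the $R_i$; their complex span has a unique basis of primitive idempotents $E_0,\ldots,E_d$ ($E_iE_j=\delta_{ij}E_i$, $\sum_jE_j=I$, $E_0=\frac1{|X|}J$). The second eigenmatrix $Q=[Q_{ij}]_{i,j=0}^d$ is defined by $E_j=\frac1{|X|}\sum_{i=0}^dQ_{ij}A_i$. The splitting field $\mathbb{F}$ is $\mathbb{Q}$ with all eigenvalues of $A_1,\ldots,A_d$ adjoined. Each $\boldsymbol\sigma\in\mathrm{Gal}(\mathbb{F}/\mathbb{Q})$, applied entrywise, maps $E_j$ to a primitive idempotent $E_{j^\sigma}$, defining a permutation $\sigma$ of $\{0,\ldots,d\}$; $\Sigma_\mathbb{Q}$ is the group of these permutations. Let $\mathcal{Q}_0=\{0\},\mathcal{Q}_1,\ldots,\mathcal{Q}_e$ be the orbits of $\Sigma_\mathbb{Q}$ on $\{0,\ldots,d\}$, define $\iota:\{0,\ldots,d\}\to\{0,\ldots,e\}$ by $\iota(i)=\ell$ if $i\in\mathcal{Q}_\ell$, let $F_\ell=\sum_{i\in\mathcal{Q}_\ell}E_i$,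 and let $\overline{Q}=QO$ where $O$ is the $(d+1)\times(e+1)$ matrix with $O_{i\ell}=1$ if $i\in\mathcal{Q}_\ell$ and $0$ otherwise. A (possibly weighted) subset $C$ with vector $\mathbf{x}$ is a Delsarte $T$-design if $E_j\mathbf{x}=0$ for all $j\in T$. *)

theory Defs
  imports "HOL-Analysis.Analysis"
begin

text \<open>Association scheme on the finite type 'x: the relation R_i is {(a,b). R a b = i}, i = 0..d.\<close>
definition comm_assoc_scheme :: "nat \<Rightarrow> ('x::finite \<Rightarrow> 'x \<Rightarrow> nat) \<Rightarrow> bool" where
  "comm_assoc_scheme d R \<longleftrightarrow>
     (\<forall>a b. R a b \<le> d) \<and>
     (\<forall>i\<le>d. \<exists>a b. R a b = i) \<and>
     (\<forall>a b. R a b = 0 \<longleftrightarrow> a = b) \<and>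
     (\<forall>i\<le>d. \<exists>i'\<le>d. \<forall>a b. R a b = i \<longleftrightarrow> R b a = i') \<and>
     (\<exists>p :: nat \<Rightarrow> nat \<Rightarrow> nat \<Rightarrow> nat. \<forall>i\<le>d. \<forall>j\<le>d. \<forall>k\<le>d.
        p i j k = p j i k \<and>
        (\<forall>a b. R a b = k \<longrightarrow> card {c. R a c = i \<and> R c b = j} = p i j k))"

definition adj :: "('x::finite \<Rightarrow> 'x \<Rightarrow> nat) \<Rightarrow> nat \<Rightarrow> complex^'x^'x" where
  "adj R i = (\<chi> a b. if R a b = i then 1 else 0)"

definition prim_idempotents ::
  "nat \<Rightarrow> ('x::finite \<Rightarrow> 'x \<Rightarrow> nat) \<Rightarrow> (nat \<Rightarrow> complex^'x^'x) \<Rightarrow> (nat \<Rightarrow> nat \<Rightarrow> complex) \<Rightarrow> bool" where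
  "prim_idempotents d R E Q \<longleftrightarrow>
     (\<forall>j\<le>d. E j \<noteq> 0) \<and>
     (\<forall>i\<le>d. \<forall>j\<le>d. E i ** E j = (if i = j then E i else 0)) \<and>
     (\<Sum>j\<le>d. E j) = mat 1 \<and>
     E 0 = (\<chi> a b. 1 / of_nat CARD('x)) \<and>
     (\<forall>j\<le>d. \<forall>a b. E j $ a $ b = (1 / of_nat CARD('x)) * (\<Sum>i\<le>d. Q i j * adj R i $ a $ b))"

definition eigenvalues_nontriv :: "nat \<Rightarrow> ('x::finite \<Rightarrow> 'x \<Rightarrow> nat) \<Rightarrow> complex set" where
  "eigenvalues_nontriv d R =
     {\<mu>. \<exists>i\<in>{1..d}. \<exists>v::complex^'x. v \<noteq> 0 \<and> adj R i *v v = \<mu> *s v}"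

definition is_subfield :: "complex set \<Rightarrow> bool" where
  "is_subfield K \<longleftrightarrow> 0 \<in> K \<and> 1 \<in> K \<and>
     (\<forall>x\<in>K. \<forall>y\<in>K. x + y \<in> K \<and> x * y \<in> K) \<and>
     (\<forall>x\<in>K. - x \<in> K \<and> inverse x \<in> K)"

definition splitting_field :: "nat \<Rightarrow> ('x::finite \<Rightarrow> 'x \<Rightarrow> nat) \<Rightarrow> complex set" where
  "splitting_field d R = \<Inter>{K. is_subfield K \<and> eigenvalues_nontriv d R \<subseteq> K}"

text \<open>Field automorphisms of K (these automatically fix Q), i.e. elements of Gal(K/Q).\<close>
definition gal_aut :: "complex set \<Rightarrow> (complex \<Rightarrow> complex) \<Rightarrow> bool" where
  "gal_aut K \<sigma> \<longleftrightarrow> bij_betw \<sigma> K K \<and>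
     (\<forall>x\<in>K. \<forall>y\<in>K. \<sigma> (x + y) = \<sigma> x + \<sigma> y \<and> \<sigma> (x * y) = \<sigma> x * \<sigma> y)"

definition mat_map :: "(complex \<Rightarrow> complex) \<Rightarrow> complex^'x^'x \<Rightarrow> complex^'x^'x" where
  "mat_map \<sigma> M = (\<chi> a b. \<sigma> (M $ a $ b))"

definition gal_orbit :: "nat \<Rightarrow> ('x::finite \<Rightarrow> 'x \<Rightarrow> nat) \<Rightarrow> (nat \<Rightarrow> complex^'x^'x) \<Rightarrow> nat \<Rightarrow> nat set" where
  "gal_orbit d R E i =
     {j. j \<le> d \<and> (\<exists>\<sigma>. gal_aut (splitting_field d R) \<sigma> \<and> mat_map \<sigma> (E i) = E j)}"

definition inner_dist :: "('x::finite \<Rightarrow> 'x \<Rightarrow> nat) \<Rightarrow> complex^'x \<Rightarrow> nat \<Rightarrow> complex" where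
  "inner_dist R x i = (\<Sum>a\<in>UNIV. \<Sum>b\<in>UNIV. x $ a * adj R i $ a $ b * x $ b) / (\<Sum>a\<in>UNIV. x $ a * x $ a)"

definition design_set :: "nat \<Rightarrow> (nat \<Rightarrow> complex^'x::finite^'x) \<Rightarrow> complex^'x \<Rightarrow> nat set" where
  "design_set d E x = {j. j \<le> d \<and> E j *v x = 0}"

end

(*
  The primitive idempotents E_0, ..., E_d are d+1 linearly independent matrices in the span of
  A_0, ..., A_d, so the two spans coincide and every A_i acts on the column space of E_l as a
  scalar, an eigenvalue of A_i.  These eigenvalues separate the idempotents, so Lagrange
  interpolation writes E_j as a product of factors (A_i - theta I) / (theta' - theta) with
  theta, theta' eigenvalues: the entries of E_j lie in the splitting field.  A Galois automorphism
  applied entrywise to E_j x = 0 (x rational) therefore gives E_(j^sigma) x = 0.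
  Moreover a Q_j = |X| x^T E_j x / x^T x, and as E_j is a Hermitian idempotent and x is real,
  x^T E_j x = |E_j x|^2, so a Q_j = 0 exactly when E_j x = 0.
*)
theory Submission
  imports Defs
begin

section \<open>Matrix algebra\<close>

lemma mat_mult_component [simp]:
  fixes M :: "'a::semiring_1^'n::finite^'m::finite"
  shows "(mat c ** M) $ a $ b = c * M $ a $ b"
  by (simp add: matrix_matrix_mult_def mat_def if_distrib if_distribR cong: if_cong)

lemma matrix_mul_mat_commute:
  fixes M :: "'a::comm_semiring_1^'n::finite^'n"
  shows "M ** mat c = mat c ** M"
  by (simp add: vec_eq_iff matrix_matrix_mult_def mat_def if_distrib if_distribR mult.commute
      cong: if_cong)

interpretation cmat: vector_space "\<lambda>c (M :: complex^'n::finite^'m::finite). mat c ** M"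
  by unfold_locales (simp_all add: vec_eq_iff algebra_simps)

lemma matrix_add_rdistrib: "(M + N) ** P = M ** P + N ** P"
  by (simp add: vec_eq_iff matrix_matrix_mult_def distrib_right sum.distrib)

lemma matrix_diff_rdistrib:
  fixes M :: "'a::ring_1^'n::finite^'m::finite"
  shows "(M - N) ** P = M ** P - N ** P"
  by (simp add: vec_eq_iff matrix_matrix_mult_def left_diff_distrib sum_subtractf)

lemma sum_matrix_mul: "(\<Sum>i\<in>S. M i) ** N = (\<Sum>i\<in>S. M i ** N)"
  by (induction S rule: infinite_finite_induct) (simp_all add: matrix_add_rdistrib)

lemma matrix_mul_sum: "M ** (\<Sum>i\<in>S. N i) = (\<Sum>i\<in>S. M ** N i)"
  by (induction S rule: infinite_finite_induct) (simp_all add: matrix_add_ldistrib)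

lemma sum_matrix_vector_mult: "(\<Sum>j\<in>S. M j) *v v = (\<Sum>j\<in>S. M j *v v)"
  by (induction S rule: infinite_finite_induct) (simp_all add: matrix_vector_mult_add_rdistrib)

definition conj_transpose :: "complex^'n^'m \<Rightarrow> complex^'m^'n" where
  "conj_transpose M = transpose (map_matrix cnj M)"

lemma conj_transpose_component [simp]: "conj_transpose M $ a $ b = cnj (M $ b $ a)"
  by (simp add: conj_transpose_def transpose_def)

lemma conj_transpose_conj_transpose [simp]: "conj_transpose (conj_transpose M) = M"
  by (simp add: vec_eq_iff)

lemma conj_transpose_mult: "conj_transpose (M ** N) = conj_transpose N ** conj_transpose M"
  by (simp add: vec_eq_iff matrix_matrix_mult_def mult.commute)

lemma sum_cnj_mult_self: "(\<Sum>a\<in>UNIV. cnj (v $ a) * v $ a) = complex_of_real ((norm v)\<^sup>2)"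
proof -
  have "(\<Sum>a\<in>UNIV. cnj (v $ a) * v $ a) = complex_of_real (\<Sum>a\<in>UNIV. (norm (v $ a))\<^sup>2)"
    by (simp only: of_real_sum complex_norm_square mult.commute)
  also have "(\<Sum>a\<in>UNIV. (norm (v $ a))\<^sup>2) = (norm v)\<^sup>2"
    by (simp add: norm_vec_def L2_set_def sum_nonneg)
  finally show ?thesis .
qed

lemma conj_transpose_mult_self_eq_0:
  assumes "conj_transpose M ** M = 0" shows "M = 0"
proof -
  have "complex_of_real ((norm (column b M))\<^sup>2) = (conj_transpose M ** M) $ b $ b" for b
    unfolding sum_cnj_mult_self[symmetric] by (simp add: matrix_matrix_mult_def column_def)
  then have "column b M = 0" for b
    using assms by simp
  then show ?thesis
    by (simp add: vec_eq_iff column_def)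
qed

lemma quadratic_form_projection:
  assumes real: "\<And>a. cnj (v $ a) = v $ a"
    and herm: "conj_transpose P = P" and idem: "P ** P = P"
  shows "(\<Sum>a\<in>UNIV. \<Sum>b\<in>UNIV. v $ a * P $ a $ b * v $ b) = complex_of_real ((norm (P *v v))\<^sup>2)"
proof -
  have "(\<Sum>a\<in>UNIV. \<Sum>b\<in>UNIV. v $ a * P $ a $ b * v $ b)
      = (\<Sum>a\<in>UNIV. \<Sum>b\<in>UNIV. v $ a * (conj_transpose P ** P) $ a $ b * v $ b)"
    by (simp only: herm idem)
  also have "\<dots> = (\<Sum>a\<in>UNIV. \<Sum>b\<in>UNIV. \<Sum>m\<in>UNIV. cnj (P $ m $ a * v $ a) * (P $ m $ b * v $ b))"
    by (simp add: matrix_matrix_mult_def real sum_distrib_left sum_distrib_right mult_ac)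
  also have "\<dots> = (\<Sum>a\<in>UNIV. \<Sum>m\<in>UNIV. \<Sum>b\<in>UNIV. cnj (P $ m $ a * v $ a) * (P $ m $ b * v $ b))"
    by (rule sum.cong[OF refl], rule sum.swap)
  also have "\<dots> = (\<Sum>m\<in>UNIV. \<Sum>a\<in>UNIV. \<Sum>b\<in>UNIV. cnj (P $ m $ a * v $ a) * (P $ m $ b * v $ b))"
    by (rule sum.swap)
  also have "\<dots> = complex_of_real ((norm (P *v v))\<^sup>2)"
    unfolding sum_cnj_mult_self[symmetric] by (simp add: matrix_vector_mult_def sum_product)
  finally show ?thesis .
qed

lemma Rats_cnj:
  assumes "q \<in> \<rat>" shows "cnj q = q"
proof -
  obtain a b where "q = of_int a / of_int b"
    using assms by (rule Rats_cases')
  then show ?thesis by simp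
qed

section \<open>Subfields of the complex numbers and their automorphisms\<close>

definition matrix_over :: "complex set \<Rightarrow> complex^'n^'m \<Rightarrow> bool" where
  "matrix_over K M \<longleftrightarrow> (\<forall>a b. M $ a $ b \<in> K)"

context
  fixes K :: "complex set"
  assumes K: "is_subfield K"
begin

lemma subfield_zero: "0 \<in> K"
  and subfield_one: "1 \<in> K"
  and subfield_add: "x \<in> K \<Longrightarrow> y \<in> K \<Longrightarrow> x + y \<in> K"
  and subfield_mult: "x \<in> K \<Longrightarrow> y \<in> K \<Longrightarrow> x * y \<in> K"
  and subfield_uminus: "x \<in> K \<Longrightarrow> - x \<in> K"
  and subfield_inverse: "x \<in> K \<Longrightarrow> inverse x \<in> K"
  using K unfolding is_subfield_def by blast+

lemma subfield_diff: "x \<in> K \<Longrightarrow> y \<in> K \<Longrightarrow> x - y \<in> K"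
  using subfield_add subfield_uminus by (metis diff_conv_add_uminus)

lemma subfield_sum: "(\<And>i. i \<in> S \<Longrightarrow> f i \<in> K) \<Longrightarrow> sum f S \<in> K"
  by (induction S rule: infinite_finite_induct) (simp_all add: subfield_zero subfield_add)

lemma subfield_of_nat: "of_nat n \<in> K"
  by (induction n) (simp_all add: subfield_zero subfield_one subfield_add)

lemma subfield_of_int: "of_int z \<in> K"
  by (cases z rule: int_cases2) (simp_all add: subfield_of_nat subfield_uminus)

lemma Rats_subset_subfield: "\<rat> \<subseteq> K"
proof
  fix q :: complex assume "q \<in> \<rat>"
  then obtain a b where "q = of_int a * inverse (of_int b)"
    by (metis Rats_cases' divide_inverse)
  then show "q \<in> K" by (simp add: subfield_mult subfield_inverse subfield_of_int)
qed

lemma matrix_over_mat: "c \<in> K \<Longrightarrow> matrix_over K (mat c)"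
  by (simp add: matrix_over_def mat_def subfield_zero)

lemma matrix_over_diff: "matrix_over K M \<Longrightarrow> matrix_over K N \<Longrightarrow> matrix_over K (M - N)"
  by (simp add: matrix_over_def subfield_diff)

lemma matrix_over_mult: "matrix_over K M \<Longrightarrow> matrix_over K N \<Longrightarrow> matrix_over K (M ** N)"
  by (simp add: matrix_over_def matrix_matrix_mult_def subfield_sum subfield_mult)

context
  fixes \<sigma> :: "complex \<Rightarrow> complex"
  assumes \<sigma>: "gal_aut K \<sigma>"
begin

lemma gal_aut_add: "x \<in> K \<Longrightarrow> y \<in> K \<Longrightarrow> \<sigma> (x + y) = \<sigma> x + \<sigma> y"
  and gal_aut_mult: "x \<in> K \<Longrightarrow> y \<in> K \<Longrightarrow> \<sigma> (x * y) = \<sigma> x * \<sigma> y"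
  using \<sigma> unfolding gal_aut_def by blast+

lemma gal_aut_zero: "\<sigma> 0 = 0"
  using gal_aut_add[OF subfield_zero subfield_zero] by simp

lemma gal_aut_one: "\<sigma> 1 = 1"
proof -
  have "\<sigma> 1 \<noteq> \<sigma> 0"
    using \<sigma> subfield_zero subfield_one unfolding gal_aut_def bij_betw_def inj_on_def
    by (metis zero_neq_one)
  moreover have "\<sigma> 1 * \<sigma> 1 = \<sigma> 1"
    using gal_aut_mult[OF subfield_one subfield_one] by simp
  ultimately show ?thesis by (simp add: gal_aut_zero)
qed

lemma gal_aut_uminus: "x \<in> K \<Longrightarrow> \<sigma> (- x) = - \<sigma> x"
  using gal_aut_add[OF _ subfield_uminus, of x x]
  by (simp add: gal_aut_zero eq_neg_iff_add_eq_0 add.commute)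

lemma gal_aut_inverse: "x \<in> K \<Longrightarrow> \<sigma> (inverse x) = inverse (\<sigma> x)"
  using gal_aut_mult[OF _ subfield_inverse, of x x]
  by (cases "x = 0") (simp_all add: gal_aut_zero gal_aut_one inverse_unique)

lemma gal_aut_sum: "(\<And>i. i \<in> S \<Longrightarrow> f i \<in> K) \<Longrightarrow> \<sigma> (sum f S) = (\<Sum>i\<in>S. \<sigma> (f i))"
  by (induction S rule: infinite_finite_induct)
    (simp_all add: gal_aut_zero gal_aut_add subfield_sum)

lemma gal_aut_of_int: "\<sigma> (of_int z) = of_int z"
proof -
  have "\<sigma> (of_nat n) = of_nat n" for n
  proof (induction n)
    case (Suc n)
    then show ?case
      using gal_aut_add[OF subfield_one subfield_of_nat[of n]] by (simp add: gal_aut_one)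
  qed (simp add: gal_aut_zero)
  then show ?thesis
    by (cases z rule: int_cases2) (simp_all add: gal_aut_uminus subfield_of_nat)
qed

lemma gal_aut_Rats:
  assumes "q \<in> \<rat>" shows "\<sigma> q = q"
proof -
  obtain a b where q: "q = of_int a * inverse (of_int b)"
    using assms by (metis Rats_cases' divide_inverse)
  show ?thesis
    unfolding q using subfield_of_int
    by (simp add: gal_aut_mult subfield_inverse gal_aut_inverse gal_aut_of_int)
qed

lemma gal_aut_matrix_vector_mult:
  assumes M: "matrix_over K M" and v: "\<And>b. v $ b \<in> \<rat>"
  shows "(mat_map \<sigma> M *v v) $ a = \<sigma> ((M *v v) $ a)"
proof -
  have vK: "v $ b \<in> K" for b
    using v Rats_subset_subfield by blast
  have MK: "M $ a $ b \<in> K" for b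
    using M by (simp add: matrix_over_def)
  have "(mat_map \<sigma> M *v v) $ a = (\<Sum>b\<in>UNIV. \<sigma> (M $ a $ b) * \<sigma> (v $ b))"
    by (simp add: matrix_vector_mult_def mat_map_def gal_aut_Rats[OF v])
  also have "\<dots> = \<sigma> ((M *v v) $ a)"
    by (simp add: matrix_vector_mult_def gal_aut_sum gal_aut_mult MK vK subfield_mult)
  finally show ?thesis .
qed

end

end

lemma splitting_field_subfield: "is_subfield (splitting_field d R)"
  unfolding splitting_field_def is_subfield_def by blast

lemma eigenvalues_in_splitting_field: "eigenvalues_nontriv d R \<subseteq> splitting_field d R"
  unfolding splitting_field_def by blast

section \<open>Orthogonal idempotents spanning a matrix algebra\<close>

locale idempotent_decomposition =
  fixes d :: nat and E :: "nat \<Rightarrow> complex^'x::finite^'x"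
  assumes E_mult_E: "i \<le> d \<Longrightarrow> j \<le> d \<Longrightarrow> E i ** E j = (if i = j then E i else 0)"
    and E_nonzero: "j \<le> d \<Longrightarrow> E j \<noteq> 0"
    and sum_E: "(\<Sum>j\<le>d. E j) = mat 1"
begin

lemma inj_on_E: "inj_on E {..d}"
proof (rule inj_onI)
  fix i j assume i: "i \<in> {..d}" and j: "j \<in> {..d}" and eq: "E i = E j"
  show "i = j"
  proof (rule ccontr)
    assume "i \<noteq> j"
    then have "E i = 0"
      using E_mult_E[of i i] E_mult_E[of i j] i j eq by simp
    then show False
      using E_nonzero i by simp
  qed
qed

lemma independent_E: "cmat.independent (E ` {..d})"
proof (rule cmat.independent_if_scalars_zero)
  fix f M
  assume zero: "(\<Sum>N\<in>E ` {..d}. mat (f N) ** N) = 0" and "M \<in> E ` {..d}"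
  then obtain m where m: "m \<le> d" "M = E m" by auto
  have "(\<Sum>N\<in>E ` {..d}. mat (f N) ** N) ** E m = (\<Sum>l\<le>d. mat (f (E l)) ** (E l ** E m))"
    by (simp add: sum.reindex[OF inj_on_E] sum_matrix_mul matrix_mul_assoc)
  also have "\<dots> = mat (f (E m)) ** E m"
    using m(1) by (simp add: E_mult_E if_distrib sum.delta cong: if_cong)
  finally show "f M = 0"
    using zero m E_nonzero by simp
qed simp

lemma span_E_mult_E:
  assumes "M \<in> cmat.span (E ` {..d})" and "l \<le> d"
  shows "\<exists>c. M ** E l = mat c ** E l"
proof -
  let ?P = "{M. \<forall>l\<le>d. \<exists>c. M ** E l = mat c ** E l}"
  have "cmat.subspace ?P"
  proof (rule cmat.subspaceI)
    show "0 \<in> ?P"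
      by (auto intro: exI[of _ 0])
    show "M + N \<in> ?P" if M: "M \<in> ?P" and N: "N \<in> ?P" for M N
    proof (intro CollectI allI impI)
      fix l assume "l \<le> d"
      then obtain a b where "M ** E l = mat a ** E l" "N ** E l = mat b ** E l"
        using M N by blast
      then have "(M + N) ** E l = mat (a + b) ** E l"
        by (simp add: matrix_add_rdistrib cmat.scale_left_distrib)
      then show "\<exists>c. (M + N) ** E l = mat c ** E l" ..
    qed
    show "mat c ** M \<in> ?P" if M: "M \<in> ?P" for c M
    proof (intro CollectI allI impI)
      fix l assume "l \<le> d"
      then obtain a where "M ** E l = mat a ** E l"
        using M by blast
      then have "(mat c ** M) ** E l = mat (c * a) ** E l"
        by (simp flip: matrix_mul_assoc)
      then show "\<exists>c'. (mat c ** M) ** E l = mat c' ** E l" ..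
    qed
  qed
  moreover have "E m \<in> ?P" if "m \<le> d" for m
    using that by (auto simp: E_mult_E intro: exI[of _ 0] exI[of _ 1])
  ultimately show ?thesis
    using assms cmat.span_subspace_induct[of M "E ` {..d}" ?P] by blast
qed

end

locale idempotent_basis = idempotent_decomposition +
  fixes A :: "nat \<Rightarrow> complex^'x^'x" and W :: "nat \<Rightarrow> nat \<Rightarrow> complex"
  assumes E_expansion: "j \<le> d \<Longrightarrow> E j = (\<Sum>i\<le>d. mat (W i j) ** A i)"
begin

lemma E_in_span_A: "j \<le> d \<Longrightarrow> E j \<in> cmat.span (A ` {..d})"
  unfolding E_expansion by (intro cmat.span_sum cmat.span_scale cmat.span_base) auto

text \<open>A dimension count: the d+1 independent E_l lie in the span of the d+1 matrices A_i.\<close>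
lemma A_in_span_E:
  assumes k: "k \<le> d" shows "A k \<in> cmat.span (E ` {..d})"
proof (rule ccontr)
  assume A_k: "A k \<notin> cmat.span (E ` {..d})"
  then have "cmat.independent (insert (A k) (E ` {..d}))"
    using independent_E by (simp add: cmat.independent_insert)
  moreover have "insert (A k) (E ` {..d}) \<subseteq> cmat.span (A ` {..d})"
    using k E_in_span_A by (auto intro: cmat.span_base)
  ultimately have "card (insert (A k) (E ` {..d})) \<le> card (A ` {..d})"
    using cmat.independent_span_bound by blast
  also have "\<dots> \<le> Suc d"
    using card_image_le[of "{..d}" A] by simp
  finally have "card (insert (A k) (E ` {..d})) \<le> Suc d" .
  moreover have "A k \<notin> E ` {..d}"
    using A_k cmat.span_base[of "A k" "E ` {..d}"] by blast
  ultimately show False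
    using card_image[OF inj_on_E] by (simp add: card_insert_disjoint)
qed

lemma span_A_subset_span_E: "cmat.span (A ` {..d}) \<subseteq> cmat.span (E ` {..d})"
  using A_in_span_E by (intro cmat.span_minimal cmat.subspace_span) auto

text \<open>\<open>eigval k l\<close> is the entry P_lk of the first eigenmatrix: A_k = sum_l P_lk E_l.\<close>
definition eigval :: "nat \<Rightarrow> nat \<Rightarrow> complex" where
  "eigval k l = (SOME c. A k ** E l = mat c ** E l)"

lemma A_mult_E: "k \<le> d \<Longrightarrow> l \<le> d \<Longrightarrow> A k ** E l = mat (eigval k l) ** E l"
  unfolding eigval_def by (rule someI_ex) (rule span_E_mult_E[OF A_in_span_E])

lemma E_mult_E_eigval:
  assumes "j \<le> d" "l \<le> d"
  shows "E j ** E l = mat (\<Sum>i\<le>d. W i j * eigval i l) ** E l"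
  using assms
  by (simp add: E_expansion[of j] sum_matrix_mul A_mult_E cmat.scale_sum_left
      flip: matrix_mul_assoc)

lemma eigval_separates:
  assumes j: "j \<le> d" and k: "k \<le> d" and "j \<noteq> k"
  shows "\<exists>i\<le>d. eigval i j \<noteq> eigval i k"
proof (rule ccontr)
  assume "\<not> ?thesis"
  then have same: "(\<Sum>i\<le>d. W i j * eigval i k) = (\<Sum>i\<le>d. W i j * eigval i j)"
    by simp
  have "mat (\<Sum>i\<le>d. W i j * eigval i j) ** E j = mat 1 ** E j"
    using E_mult_E_eigval[OF j j] E_mult_E[OF j j] by simp
  then have "(\<Sum>i\<le>d. W i j * eigval i j) = 1"
    using E_nonzero[OF j] cmat.scale_cancel_right[of _ "E j"] by blast
  then have "E j ** E k = E k"
    using E_mult_E_eigval[OF j k] same by simp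
  then show False
    using E_mult_E[OF j k] E_nonzero[OF k] \<open>j \<noteq> k\<close> by simp
qed

lemma eigval_eigenvector:
  assumes k: "k \<le> d" and l: "l \<le> d"
  shows "\<exists>v. v \<noteq> 0 \<and> A k *v v = eigval k l *s v"
proof -
  obtain b where "column b (E l) \<noteq> 0"
    using E_nonzero[OF l] by (metis column_def vec_eq_iff zero_index vec_lambda_beta)
  moreover have "A k *v column b (E l) = eigval k l *s column b (E l)"
  proof -
    have "(A k ** E l) $ a $ b = eigval k l * E l $ a $ b" for a
      using A_mult_E[OF k l] by simp
    then show ?thesis
      by (simp add: vec_eq_iff column_def matrix_vector_mult_def matrix_matrix_mult_def)
  qed
  ultimately show ?thesis by blast
qed

lemma interpolation_factor_mult_E:
  assumes i: "i \<le> d" and l: "l \<le> d"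
  shows "(mat (inverse (eigval i j - eigval i k)) ** (A i - mat (eigval i k))) ** E l
    = mat ((eigval i l - eigval i k) / (eigval i j - eigval i k)) ** E l"
proof -
  have "(mat (inverse (eigval i j - eigval i k)) ** (A i - mat (eigval i k))) ** E l
      = mat (inverse (eigval i j - eigval i k)) ** (A i ** E l - mat (eigval i k) ** E l)"
    by (simp add: matrix_diff_rdistrib flip: matrix_mul_assoc)
  also have "\<dots> = mat ((eigval i l - eigval i k) / (eigval i j - eigval i k)) ** E l"
    by (simp add: A_mult_E[OF i l] divide_inverse mult.commute flip: cmat.scale_left_diff_distrib)
  finally show ?thesis .
qed

context
  fixes K :: "complex set"
  assumes K: "is_subfield K"
    and A_over: "\<And>i. i \<le> d \<Longrightarrow> matrix_over K (A i)"
    and eigval_in: "\<And>i l. i \<le> d \<Longrightarrow> l \<le> d \<Longrightarrow> eigval i l \<in> K"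
begin

lemma interpolating_matrix:
  assumes j: "j \<le> d" and S: "finite S" "S \<subseteq> {..d} - {j}"
  shows "\<exists>M c. matrix_over K M \<and> (\<forall>l\<le>d. M ** E l = mat (c l) ** E l)
    \<and> c j = 1 \<and> (\<forall>l\<in>S. c l = 0)"
  using S
proof (induction S rule: finite_induct)
  case empty
  show ?case
    by (intro exI[of _ "mat 1"] exI[of _ "\<lambda>_. 1"])
      (simp add: matrix_over_mat[OF K] subfield_one[OF K])
next
  case (insert k S)
  then obtain M c where M: "matrix_over K M" and ME: "\<forall>l\<le>d. M ** E l = mat (c l) ** E l"
    and c: "c j = 1" "\<forall>l\<in>S. c l = 0"
    by blast
  from insert.prems have k: "k \<le> d" "j \<noteq> k" by auto
  then obtain i where i: "i \<le> d" and D: "eigval i j - eigval i k \<noteq> 0"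
    using eigval_separates[OF j] by fastforce
  \<comment> \<open>Multiply by a factor that vanishes on E_k and is the identity on E_j.\<close>
  define L where "L = mat (inverse (eigval i j - eigval i k)) ** (A i - mat (eigval i k))"
  define c' where "c' l = (eigval i l - eigval i k) / (eigval i j - eigval i k) * c l" for l
  have "matrix_over K L"
    unfolding L_def using A_over[OF i] eigval_in[OF i] j k
    by (intro matrix_over_mult[OF K] matrix_over_mat[OF K] matrix_over_diff[OF K]
        subfield_inverse[OF K] subfield_diff[OF K]) auto
  then have "matrix_over K (L ** M)"
    using M by (rule matrix_over_mult[OF K])
  moreover have "(L ** M) ** E l = mat (c' l) ** E l" if l: "l \<le> d" for l
  proof -
    have "(L ** M) ** E l = L ** (mat (c l) ** E l)"
      using ME l by (simp flip: matrix_mul_assoc)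
    also have "\<dots> = mat (c l) ** (L ** E l)"
      by (metis matrix_mul_assoc matrix_mul_mat_commute)
    also have "\<dots> = mat (c' l) ** E l"
      unfolding L_def by (simp add: interpolation_factor_mult_E[OF i l] c'_def mult.commute)
    finally show ?thesis .
  qed
  moreover have "c' j = 1" "\<forall>l\<in>insert k S. c' l = 0"
    using c D by (auto simp: c'_def)
  ultimately show ?case
    by blast
qed

lemma E_over_subfield:
  assumes j: "j \<le> d" shows "matrix_over K (E j)"
proof -
  obtain M c where M: "matrix_over K M" and ME: "\<forall>l\<le>d. M ** E l = mat (c l) ** E l"
    and c: "c j = 1" "\<forall>l\<in>{..d} - {j}. c l = 0"
    using interpolating_matrix[OF j, of "{..d} - {j}"] by blast
  have "M = M ** (\<Sum>l\<le>d. E l)"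
    by (simp add: sum_E)
  also have "\<dots> = (\<Sum>l\<le>d. M ** E l)"
    by (rule matrix_mul_sum)
  also have "\<dots> = (\<Sum>l\<le>d. if l = j then E j else 0)"
    using ME c by (intro sum.cong) auto
  also have "\<dots> = E j"
    using j by simp
  finally show ?thesis
    using M by simp
qed

end

lemma E_hermitian_if_span_closed:
  assumes A_adj: "\<And>i. i \<le> d \<Longrightarrow> conj_transpose (A i) \<in> cmat.span (A ` {..d})"
    and j: "j \<le> d"
  shows "conj_transpose (E j) = E j"
proof -
  let ?F = "conj_transpose (E j)"
  have "?F = (\<Sum>i\<le>d. mat (cnj (W i j)) ** conj_transpose (A i))"
    by (simp add: E_expansion[OF j] vec_eq_iff sum_component)
  also have "\<dots> \<in> cmat.span (E ` {..d})"
    using A_adj span_A_subset_span_E by (intro cmat.span_sum cmat.span_scale) auto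
  finally obtain f where f: "?F ** E j = mat f ** E j"
    using span_E_mult_E j by blast
  have "?F ** ?F = ?F"
    using E_mult_E[OF j j] by (simp flip: conj_transpose_mult)
  have "mat (f * f) ** E j = mat f ** (?F ** E j)"
    by (simp add: f)
  also have "\<dots> = ?F ** (mat f ** E j)"
    by (simp add: matrix_mul_assoc matrix_mul_mat_commute)
  also have "\<dots> = ?F ** E j"
    by (simp add: matrix_mul_assoc \<open>?F ** ?F = ?F\<close> flip: f)
  finally have "mat (f * f) ** E j = mat f ** E j"
    by (simp add: f)
  then have "f * f = f"
    using E_nonzero[OF j] cmat.scale_cancel_right[of _ "E j"] by blast
  moreover have "f \<noteq> 0"
    using f E_nonzero[OF j] conj_transpose_mult_self_eq_0[of "E j"] by auto
  ultimately have "?F ** E j = E j"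
    using f by simp
  then show ?thesis
    by (metis conj_transpose_conj_transpose conj_transpose_mult)
qed

end

section \<open>Association schemes\<close>

locale assoc_scheme_idempotents =
  fixes d :: nat and R :: "'x::finite \<Rightarrow> 'x \<Rightarrow> nat"
    and E :: "nat \<Rightarrow> complex^'x^'x" and Q :: "nat \<Rightarrow> nat \<Rightarrow> complex"
  assumes scheme: "comm_assoc_scheme d R"
    and idem: "prim_idempotents d R E Q"

sublocale assoc_scheme_idempotents \<subseteq> idempotent_basis d E "adj R" "\<lambda>i j. Q i j / of_nat CARD('x)"
proof unfold_locales
  show "i \<le> d \<Longrightarrow> j \<le> d \<Longrightarrow> E i ** E j = (if i = j then E i else 0)"
    and "j \<le> d \<Longrightarrow> E j \<noteq> 0" and "(\<Sum>j\<le>d. E j) = mat 1" for i j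
    using idem unfolding prim_idempotents_def by blast+
  show "E j = (\<Sum>i\<le>d. mat (Q i j / of_nat CARD('x)) ** adj R i)" if "j \<le> d" for j
    using idem that unfolding prim_idempotents_def
    by (simp add: vec_eq_iff sum_component sum_distrib_left)
qed

context assoc_scheme_idempotents
begin

lemma adj_zero: "adj R 0 = mat 1"
  using scheme unfolding comm_assoc_scheme_def by (simp add: adj_def mat_def vec_eq_iff)

lemma conj_transpose_adj:
  assumes "i \<le> d" shows "conj_transpose (adj R i) \<in> cmat.span (adj R ` {..d})"
proof -
  have "\<forall>i\<le>d. \<exists>i'\<le>d. \<forall>a b. R a b = i \<longleftrightarrow> R b a = i'"
    using scheme unfolding comm_assoc_scheme_def by (elim conjE)
  then obtain i' where "i' \<le> d" and i': "\<And>a b. R a b = i \<longleftrightarrow> R b a = i'"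
    using assms by blast
  then have "conj_transpose (adj R i) = adj R i'"
    by (simp add: adj_def vec_eq_iff)
  then show ?thesis
    using \<open>i' \<le> d\<close> by (auto intro: cmat.span_base)
qed

lemma E_hermitian: "j \<le> d \<Longrightarrow> conj_transpose (E j) = E j"
  using E_hermitian_if_span_closed[OF conj_transpose_adj] .

lemma eigval_zero:
  assumes "l \<le> d" shows "eigval 0 l = 1"
proof -
  have "mat (eigval 0 l) ** E l = mat 1 ** E l"
    using A_mult_E[of 0 l] assms by (simp add: adj_zero)
  then show ?thesis
    using E_nonzero[OF assms] cmat.scale_cancel_right[of _ "E l"] by blast
qed

lemma E_over_splitting_field: "j \<le> d \<Longrightarrow> matrix_over (splitting_field d R) (E j)"
proof (rule E_over_subfield[OF splitting_field_subfield])
  show "matrix_over (splitting_field d R) (adj R i)" for i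
    by (simp add: matrix_over_def adj_def subfield_zero subfield_one splitting_field_subfield)
  show "eigval i l \<in> splitting_field d R" if "i \<le> d" "l \<le> d" for i l
  proof (cases "i = 0")
    case True
    then show ?thesis
      using that eigval_zero subfield_one[OF splitting_field_subfield] by simp
  next
    case False
    then have "eigval i l \<in> eigenvalues_nontriv d R"
      using that eigval_eigenvector unfolding eigenvalues_nontriv_def by fastforce
    then show ?thesis
      using eigenvalues_in_splitting_field by blast
  qed
qed

lemma design_set_gal_closed:
  assumes rat: "\<forall>a. x $ a \<in> \<rat>" and j: "j \<in> design_set d E x"
    and \<sigma>: "gal_aut (splitting_field d R) \<sigma>" and k: "k \<le> d" and "mat_map \<sigma> (E j) = E k"
  shows "k \<in> design_set d E x"
proof -
  from j have "j \<le> d" and "E j *v x = 0"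
    by (simp_all add: design_set_def)
  have "(E k *v x) $ a = \<sigma> ((E j *v x) $ a)" for a
    using gal_aut_matrix_vector_mult[OF splitting_field_subfield \<sigma> E_over_splitting_field[OF \<open>j \<le> d\<close>]]
      rat \<open>mat_map \<sigma> (E j) = E k\<close> by simp
  then show ?thesis
    using \<open>E j *v x = 0\<close> k gal_aut_zero[OF splitting_field_subfield \<sigma>]
    by (simp add: design_set_def vec_eq_iff)
qed

lemma gal_orbit_annihilates:
  assumes "\<forall>a. x $ a \<in> \<rat>" and "i \<le> d" and "E i *v x = 0" and "j \<in> gal_orbit d R E i"
  shows "E j *v x = 0"
  using assms design_set_gal_closed[of x i]
  unfolding gal_orbit_def design_set_def by blast

lemma inner_dist_Q:
  assumes i: "i \<le> d"
  shows "(\<Sum>k\<le>d. inner_dist R x k * Q k i)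
    = of_nat CARD('x) * (\<Sum>a\<in>UNIV. \<Sum>b\<in>UNIV. x $ a * E i $ a $ b * x $ b) / (\<Sum>a\<in>UNIV. x $ a * x $ a)"
proof -
  have E_i: "of_nat CARD('x) * E i $ a $ b = (\<Sum>k\<le>d. Q k i * adj R k $ a $ b)" for a b
    using idem i unfolding prim_idempotents_def by simp
  have "(\<Sum>k\<le>d. Q k i * (\<Sum>a\<in>UNIV. \<Sum>b\<in>UNIV. x $ a * adj R k $ a $ b * x $ b))
      = (\<Sum>k\<le>d. \<Sum>a\<in>UNIV. \<Sum>b\<in>UNIV. x $ a * (Q k i * adj R k $ a $ b) * x $ b)"
    by (simp add: sum_distrib_left mult_ac)
  also have "\<dots> = (\<Sum>a\<in>UNIV. \<Sum>k\<le>d. \<Sum>b\<in>UNIV. x $ a * (Q k i * adj R k $ a $ b) * x $ b)"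
    by (rule sum.swap)
  also have "\<dots> = (\<Sum>a\<in>UNIV. \<Sum>b\<in>UNIV. \<Sum>k\<le>d. x $ a * (Q k i * adj R k $ a $ b) * x $ b)"
    by (rule sum.cong[OF refl], rule sum.swap)
  also have "\<dots> = (\<Sum>a\<in>UNIV. \<Sum>b\<in>UNIV. x $ a * (of_nat CARD('x) * E i $ a $ b) * x $ b)"
    by (simp only: E_i sum_distrib_left sum_distrib_right)
  finally have "(\<Sum>k\<le>d. Q k i * (\<Sum>a\<in>UNIV. \<Sum>b\<in>UNIV. x $ a * adj R k $ a $ b * x $ b))
      = of_nat CARD('x) * (\<Sum>a\<in>UNIV. \<Sum>b\<in>UNIV. x $ a * E i $ a $ b * x $ b)"
    by (simp add: sum_distrib_left mult_ac)
  then show ?thesis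
    by (simp add: inner_dist_def mult.commute flip: sum_divide_distrib)
qed

lemma inner_dist_Q_eq_0_iff:
  assumes rat: "\<forall>a. x $ a \<in> \<rat>" and "x \<noteq> 0" and i: "i \<le> d"
  shows "(\<Sum>k\<le>d. inner_dist R x k * Q k i) = 0 \<longleftrightarrow> E i *v x = 0"
proof -
  have real: "cnj (x $ a) = x $ a" for a
    using rat Rats_cnj by blast
  have "(\<Sum>a\<in>UNIV. x $ a * x $ a) = complex_of_real ((norm x)\<^sup>2)"
    using sum_cnj_mult_self[of x] by (simp add: real)
  moreover have "(\<Sum>a\<in>UNIV. \<Sum>b\<in>UNIV. x $ a * E i $ a $ b * x $ b) = complex_of_real ((norm (E i *v x))\<^sup>2)"
    using quadratic_form_projection[OF real E_hermitian[OF i]] E_mult_E[OF i i] by simp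
  ultimately show ?thesis
    using inner_dist_Q[OF i] \<open>x \<noteq> 0\<close> by simp
qed

lemma gal_orbit_subset: "gal_orbit d R E i \<subseteq> {..d}"
  unfolding gal_orbit_def by auto

lemma gal_orbit_sum_annihilates:
  assumes "\<forall>a. x $ a \<in> \<rat>" and "i \<le> d" and "E i *v x = 0"
  shows "(\<Sum>j\<in>gal_orbit d R E i. E j) *v x = 0"
  using gal_orbit_annihilates[OF assms] by (simp add: sum_matrix_vector_mult)

lemma inner_dist_Q_gal_orbit_sum:
  assumes rat: "\<forall>a. x $ a \<in> \<rat>" and "x \<noteq> 0" and i: "i \<le> d"
    and zero: "(\<Sum>k\<le>d. inner_dist R x k * Q k i) = 0"
  shows "(\<Sum>k\<le>d. inner_dist R x k * (\<Sum>j\<in>gal_orbit d R E i. Q k j)) = 0"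
proof -
  have "(\<Sum>k\<le>d. inner_dist R x k * Q k j) = 0" if "j \<in> gal_orbit d R E i" for j
    using that gal_orbit_subset gal_orbit_annihilates[OF rat i] zero
      inner_dist_Q_eq_0_iff[OF rat \<open>x \<noteq> 0\<close>] i by blast
  then have "(\<Sum>j\<in>gal_orbit d R E i. \<Sum>k\<le>d. inner_dist R x k * Q k j) = 0"
    by simp
  then show ?thesis
    by (simp add: sum_distrib_left sum.swap[of _ "gal_orbit d R E i"])
qed

end

theorem theorem4p1:
  fixes d :: nat and R :: "'x::finite \<Rightarrow> 'x \<Rightarrow> nat"
    and E :: "nat \<Rightarrow> complex^'x^'x" and Q :: "nat \<Rightarrow> nat \<Rightarrow> complex"
    and x :: "complex^'x"
  assumes scheme: "comm_assoc_scheme d R"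
    and idem: "prim_idempotents d R E Q"
    and rat: "\<forall>a. x $ a \<in> \<rat>"
    and nz: "x \<noteq> 0"
  shows
    "(\<forall>j\<in>design_set d E x. \<forall>\<sigma> k. gal_aut (splitting_field d R) \<sigma> \<and> k \<le> d \<and>
          mat_map \<sigma> (E j) = E k \<longrightarrow> k \<in> design_set d E x)
     \<and> (\<forall>j\<in>design_set d E x. gal_orbit d R E j \<subseteq> design_set d E x)
     \<and> (\<forall>i\<le>d. \<forall>j\<le>d. j \<in> gal_orbit d R E i \<longrightarrow>
          ((\<Sum>k\<le>d. inner_dist R x k * Q k i) = 0 \<longrightarrow> (\<Sum>k\<le>d. inner_dist R x k * Q k j) = 0)
        \<and> (E i *v x = 0 \<longrightarrow> E j *v x = 0))
     \<and> (\<forall>i\<le>d. ((\<Sum>k\<le>d. inner_dist R x k * Q k i) = 0 \<longleftrightarrow> E i *v x = 0))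
     \<and> (\<forall>i\<le>d.
          ((\<Sum>k\<le>d. inner_dist R x k * Q k i) = 0 \<longrightarrow>
             (\<Sum>k\<le>d. inner_dist R x k * (\<Sum>j\<in>gal_orbit d R E i. Q k j)) = 0)
        \<and> (E i *v x = 0 \<longrightarrow> (\<Sum>j\<in>gal_orbit d R E i. E j) *v x = 0))"
proof -
  interpret assoc_scheme_idempotents d R E Q
    using scheme idem by unfold_locales
  have iff: "\<forall>i\<le>d. (\<Sum>k\<le>d. inner_dist R x k * Q k i) = 0 \<longleftrightarrow> E i *v x = 0"
    using inner_dist_Q_eq_0_iff[OF rat nz] by blast
  have closed: "\<forall>j\<in>design_set d E x. \<forall>\<sigma> k. gal_aut (splitting_field d R) \<sigma> \<and> k \<le> d \<and>
      mat_map \<sigma> (E j) = E k \<longrightarrow> k \<in> design_set d E x"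
    using design_set_gal_closed[OF rat] by blast
  then have "\<forall>j\<in>design_set d E x. gal_orbit d R E j \<subseteq> design_set d E x"
    unfolding gal_orbit_def by blast
  moreover have "\<forall>i\<le>d. \<forall>j\<le>d. j \<in> gal_orbit d R E i \<longrightarrow>
      ((\<Sum>k\<le>d. inner_dist R x k * Q k i) = 0 \<longrightarrow> (\<Sum>k\<le>d. inner_dist R x k * Q k j) = 0)
      \<and> (E i *v x = 0 \<longrightarrow> E j *v x = 0)"
    using iff gal_orbit_annihilates[OF rat] by blast
  moreover have "\<forall>i\<le>d.
      ((\<Sum>k\<le>d. inner_dist R x k * Q k i) = 0 \<longrightarrow>
        (\<Sum>k\<le>d. inner_dist R x k * (\<Sum>j\<in>gal_orbit d R E i. Q k j)) = 0)
      \<and> (E i *v x = 0 \<longrightarrow> (\<Sum>j\<in>gal_orbit d R E i. E j) *v x = 0)"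
    using inner_dist_Q_gal_orbit_sum[OF rat nz] gal_orbit_sum_annihilates[OF rat] by blast
  ultimately show ?thesis
    using closed iff by blast
qed

end
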